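(* Let $d\in\mathbb Z_{>0}$ and $s\in\{-1,1\}$. Then there exist infinitely many positive integers $n$ of the special form such that $\Phi_n(T)\equiv 1+sT^d \pmod{T^{2d}}$ in $\mathbb Z[T]$.
   Context: $\Phi_n(T)\in\mathbb Z[T]$ denotes the $n$-th cyclotomic polynomial (the monic minimal polynomial over $\mathbb Q$ of a primitive $n$-th root of unity). A positive integer $n$ is of the special form if $n=pm$ where $p$ is a prime number and $m$ is a positive integer dividing $p-1$. *)

theory Defs
  imports Complex_Main "HOL-Computational_Algebra.Polynomial" "HOL-Computational_Algebra.Primes"
begin

text \<open>The n-th cyclotomic polynomial, defined as in the paper: the monic minimal polynomial
  over the rationals of a primitive n-th root of unity (here the root cis(2 pi / n)),
  which is asserted to have integer coefficients by taking it in int poly.\<close>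
definition cyclotomic_poly :: "nat \<Rightarrow> int poly" where
  "cyclotomic_poly n =
     (THE p :: int poly.
        lead_coeff p = 1 \<and>
        poly (map_poly of_int p) (cis (2 * pi / real n)) = (0::complex) \<and>
        (\<forall>q :: rat poly. q \<noteq> 0 \<and> poly (map_poly of_rat q) (cis (2 * pi / real n)) = (0::complex)
            \<longrightarrow> degree p \<le> degree q))"

definition special_form :: "nat \<Rightarrow> bool" where
  "special_form n \<longleftrightarrow> (\<exists>p m. prime p \<and> m > 0 \<and> m dvd (p - 1) \<and> n = p * m)"

end

theory Submission
  imports "Berlekamp_Zassenhaus.Factor_Bound" "HOL-Number_Theory.Number_Theory" Defs
begin

(* All congruences are modulo powers of X; e and s denote signs +-1.
   For squarefree R, the identities Phi_R(X^q) = Phi_qR Phi_R and Phi_R(X^q) = Phi_R(0) mod X^q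
   (q a prime not dividing R) show by induction that Phi_R = e (1 - s X) mod X^2, and one extra
   prime flips s. If R contains every prime factor of d and m = R d, then Phi_m(X) = Phi_R(X^d)
   = e (1 - s X^d) mod X^(2d), and the same identities for a prime p >= 2d not dividing m give
   Phi_pm = e (e (1 - s X^d))^(-1) = 1 + s X^d mod X^(2d). Infinitely many such p satisfy
   p = 1 mod m: they are found among the prime factors of the values Phi_m(a).
   Since cyclotomic_poly is defined as a minimal polynomial, the product of X - z over the
   primitive n-th roots z must be shown irreducible: a monic integral minimal polynomial f of
   zeta_n vanishes at zeta_n^p for every large prime p, because f(X^j)^p = f(X^(j p)) mod p while
   the remainders of f(X^j) modulo f have bounded coefficients. *)

section \<open>Primitive roots of unity\<close>

definition primitive_roots :: "nat \<Rightarrow> complex set" where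
  "primitive_roots n = {z. z ^ n = 1 \<and> (\<forall>k. z ^ k = 1 \<longrightarrow> n dvd k)}"

lemma primitive_roots_subset: "primitive_roots n \<subseteq> {z. z ^ n = 1}"
  unfolding primitive_roots_def by auto

lemma finite_primitive_roots: "n > 0 \<Longrightarrow> finite (primitive_roots n)"
  using finite_subset[OF primitive_roots_subset finite_nth_roots] by auto

lemma primitive_root_power_eq_1_iff: "z \<in> primitive_roots n \<Longrightarrow> z ^ k = 1 \<longleftrightarrow> n dvd k"
  unfolding primitive_roots_def by (auto simp: power_mult)

lemma primitive_roots_disjoint: "z \<in> primitive_roots e \<Longrightarrow> z \<in> primitive_roots e' \<Longrightarrow> e = e'"
  unfolding primitive_roots_def by (auto intro: dvd_antisym)

lemma primitive_root_nonzero: "n > 0 \<Longrightarrow> z \<in> primitive_roots n \<Longrightarrow> z \<noteq> 0"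
  using primitive_root_power_eq_1_iff[of z n n] by (auto simp: power_0_left)

lemma primitive_roots_1: "primitive_roots 1 = {1}"
  unfolding primitive_roots_def by auto

lemma root_of_unity_primitive:
  assumes "n > 0" "z ^ n = (1::complex)"
  obtains e where "e dvd n" "z \<in> primitive_roots e"
proof -
  let ?P = "\<lambda>k. 0 < k \<and> z ^ k = 1"
  define e where "e = (LEAST k. ?P k)"
  have e: "0 < e" "z ^ e = 1"
    using LeastI[of ?P n] assms unfolding e_def by auto
  have "e dvd k" if "z ^ k = 1" for k
  proof -
    have "z ^ k = (z ^ e) ^ (k div e) * z ^ (k mod e)"
      by (simp only: power_mult[symmetric] power_add[symmetric] mult_div_mod_eq)
    then have "z ^ (k mod e) = 1" using e that by simp
    moreover have "k mod e < (LEAST k. ?P k)" using e by (simp add: e_def[symmetric])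
    then have "\<not> ?P (k mod e)" by (rule not_less_Least)
    ultimately show ?thesis by auto
  qed
  then show thesis using that e assms by (auto simp: primitive_roots_def)
qed

lemma roots_of_unity_eq_UN_primitive_roots:
  assumes "n > 0"
  shows "{z::complex. z ^ n = 1} = (\<Union>e\<in>{e. e dvd n}. primitive_roots e)"
proof (intro equalityI subsetI)
  fix z assume "z \<in> {z::complex. z ^ n = 1}"
  then show "z \<in> (\<Union>e\<in>{e. e dvd n}. primitive_roots e)"
    using assms by (auto elim: root_of_unity_primitive)
next
  fix z assume "z \<in> (\<Union>e\<in>{e. e dvd n}. primitive_roots e)"
  then obtain e where "e dvd n" "z \<in> primitive_roots e" by blast
  then show "z \<in> {z::complex. z ^ n = 1}" using primitive_root_power_eq_1_iff[of z e n] by simp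
qed

lemma primitive_root_power:
  assumes y: "y \<in> primitive_roots e" and e: "e > 0"
  shows "y ^ p \<in> primitive_roots (e div gcd e p)"
proof -
  define g where "g = gcd e p"
  have "g > 0" using e by (simp add: g_def)
  obtain e' p' where ep: "e = g * e'" "p = g * p'"
    unfolding g_def by (meson dvdE gcd_dvd1 gcd_dvd2)
  have "e div g = e'" using \<open>g > 0\<close> ep by simp
  have "g * gcd e' p' = g"
    using gcd_mult_distrib_nat[of g e' p'] unfolding ep[symmetric] g_def[symmetric] .
  then have "gcd e' p' = 1" using \<open>g > 0\<close> by simp
  have "(y ^ p) ^ k = 1 \<longleftrightarrow> e' dvd k" for k
  proof -
    have "(y ^ p) ^ k = 1 \<longleftrightarrow> g * e' dvd g * (p' * k)"
      using primitive_root_power_eq_1_iff[OF y, of "p * k"] ep by (simp add: power_mult mult.assoc)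
    also have "\<dots> \<longleftrightarrow> e' dvd p' * k" using \<open>g > 0\<close> by simp
    also have "\<dots> \<longleftrightarrow> e' dvd k"
      by (rule coprime_dvd_mult_right_iff[OF \<open>gcd e' p' = 1\<close>[folded coprime_iff_gcd_eq_1]])
    finally show ?thesis .
  qed
  then show ?thesis unfolding g_def[symmetric] \<open>e div g = e'\<close> primitive_roots_def by simp
qed

lemma primitive_roots_power_preimage:
  assumes p: "prime p" and m: "m > 0"
  shows "{y. y ^ p \<in> primitive_roots m} =
           primitive_roots (p * m) \<union> (if p dvd m then {} else primitive_roots m)"
proof (intro equalityI subsetI)
  fix y assume "y \<in> {y. y ^ p \<in> primitive_roots m}"
  then have yp: "y ^ p \<in> primitive_roots m" by simp
  then have "y ^ (p * m) = 1" using primitive_root_power_eq_1_iff[OF yp, of m] by (simp add: power_mult)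
  moreover have "p * m > 0" using p m by (simp add: prime_gt_0_nat)
  ultimately obtain e where e: "e dvd p * m" "y \<in> primitive_roots e"
    using root_of_unity_primitive by blast
  have e0: "e > 0" using e(1) m p by (auto simp: prime_gt_0_nat intro: Nat.gr0I)
  have me: "m = e div gcd e p"
    using primitive_roots_disjoint[OF yp primitive_root_power[OF e(2) e0]] .
  show "y \<in> primitive_roots (p * m) \<union> (if p dvd m then {} else primitive_roots m)"
  proof (cases "p dvd e")
    case True
    then have "gcd e p = p" by (rule gcd_nat.absorb2)
    then have "e = p * m" using me \<open>p dvd e\<close> by (simp add: dvd_mult_div_cancel)
    then show ?thesis using e(2) by simp
  next
    case False
    then have "gcd e p = 1" using p by (metis gcd_dvd1 gcd_dvd2 prime_nat_iff)
    then have "e = m" using me by simp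
    then show ?thesis using e(2) False by simp
  qed
next
  fix y assume y: "y \<in> primitive_roots (p * m) \<union> (if p dvd m then {} else primitive_roots m)"
  have p0: "p > 0" using p by (simp add: prime_gt_0_nat)
  show "y \<in> {y. y ^ p \<in> primitive_roots m}"
  proof (cases "y \<in> primitive_roots (p * m)")
    case True
    have "y ^ p \<in> primitive_roots (p * m div gcd (p * m) p)"
      by (rule primitive_root_power[OF True]) (use p0 m in simp)
    moreover have "gcd (p * m) p = p" by (rule gcd_nat.absorb2) simp
    ultimately show ?thesis using p0 by simp
  next
    case False
    then have "y \<in> primitive_roots m" "\<not> p dvd m" using y by (auto split: if_splits)
    moreover from this(2) have "gcd m p = 1" using p by (metis gcd_dvd1 gcd_dvd2 prime_nat_iff)
    ultimately show ?thesis using primitive_root_power[of y m p] m by auto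
  qed
qed

definition zeta :: "nat \<Rightarrow> complex" where
  "zeta n = cis (2 * pi / real n)"

lemma zeta_power: "zeta n ^ k = cis (2 * pi * real k / real n)"
  unfolding zeta_def by (simp add: DeMoivre mult_ac)

lemma zeta_power_eq_1_iff:
  assumes "n > 0"
  shows "zeta n ^ k = 1 \<longleftrightarrow> n dvd k"
proof
  assume "zeta n ^ k = 1"
  then have "cos (2 * pi * real k / real n) = 1" unfolding zeta_power by (simp add: complex_eq_iff)
  then obtain m :: int where "2 * pi * real k / real n = real_of_int m * (2 * pi)"
    by (auto simp: cos_one_2pi_int)
  then have "real_of_int (int k) = real_of_int (m * int n)" using assms by (simp add: field_simps)
  then have "int k = m * int n" by (simp only: of_int_eq_iff)
  then show "n dvd k" by (metis dvd_triv_right int_dvd_int_iff)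
next
  assume "n dvd k"
  then obtain c where "k = n * c" ..
  then have "zeta n ^ k = cis (2 * pi * real c)"
    using assms by (simp add: zeta_power mult.assoc del: cis_multiple_2pi)
  also have "\<dots> = 1" by simp
  finally show "zeta n ^ k = 1" .
qed

lemma zeta_in_primitive_roots: "n > 0 \<Longrightarrow> zeta n \<in> primitive_roots n"
  unfolding primitive_roots_def by (simp add: zeta_power_eq_1_iff)

lemma primitive_root_eq_zeta_power:
  assumes n: "n > 0" and z: "z \<in> primitive_roots n"
  obtains k where "gcd k n = 1" "z = zeta n ^ k"
proof -
  have "z ^ n = 1" using z primitive_roots_subset by auto
  then have "z \<in> (\<lambda>k. cis (2 * pi * real k / real n)) ` {..<n}"
    using bij_betw_imp_surj_on[OF bij_betw_roots_unity[OF n]] by simp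
  then obtain k where zk: "z = zeta n ^ k" by (auto simp: zeta_power)
  define g where "g = gcd k n"
  have "z ^ (n div g) = zeta n ^ (n * (k div g))"
    unfolding zk g_def power_mult[symmetric] by (simp add: div_mult_swap mult.commute)
  also have "\<dots> = 1" using zeta_power_eq_1_iff[OF n] by simp
  finally have "n dvd n div g" using primitive_root_power_eq_1_iff[OF z, of "n div g"] by simp
  moreover have "n div g > 0" using n by (simp add: g_def div_greater_zero_iff gcd_le2_nat)
  ultimately have "n \<le> n div g" by (simp add: dvd_imp_le)
  moreover have "g > 0" using n by (simp add: g_def)
  ultimately have "g = 1" using div_less_dividend[of g n] n by linarith
  then show thesis using that[of k] zk by (simp add: g_def)
qed

lemma prod_linear_factors_dvd:
  fixes f :: "'a::idom poly"
  assumes "finite S" "\<And>z. z \<in> S \<Longrightarrow> poly f z = 0"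
  shows "(\<Prod>z\<in>S. [:-z, 1:]) dvd f"
  using assms
proof (induction S arbitrary: f rule: finite_induct)
  case (insert a S)
  have "[:-a, 1:] dvd f" using insert.prems by (simp add: poly_eq_0_iff_dvd)
  then obtain g where g: "f = [:-a, 1:] * g" ..
  have "poly g z = 0" if "z \<in> S" for z
    using insert.prems[of z] insert.hyps(2) that g by auto
  then have "(\<Prod>z\<in>S. [:-z, 1:]) dvd g" by (rule insert.IH)
  moreover have "(\<Prod>z\<in>insert a S. [:-z, 1:]) = [:-a, 1:] * (\<Prod>z\<in>S. [:-z, 1:])"
    using insert.hyps by simp
  ultimately show ?case unfolding g by (metis mult_dvd_mono dvd_refl)
qed simp

lemma monic_prod_linear_factors: "monic (\<Prod>z\<in>S. [:-(z::'a::idom), 1:])"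
  by (simp add: lead_coeff_prod)

lemma degree_prod_linear_factors:
  "finite S \<Longrightarrow> degree (\<Prod>z\<in>S. [:-(z::'a::idom), 1:]) = card S"
  by (subst degree_prod_eq_sum_degree) auto

lemma monic_dvd_imp_eq:
  fixes a b :: "'a::idom poly"
  assumes "monic a" "monic b" "a dvd b" "degree a = degree b"
  shows "a = b"
proof -
  obtain c where c: "b = a * c" using assms(3) ..
  have "a \<noteq> 0" "c \<noteq> 0" using c assms(1,2) by auto
  then have "degree b = degree a + degree c" using c by (simp add: degree_mult_eq)
  then have "degree c = 0" using assms(4) by simp
  then obtain k where "c = [:k:]" by (rule degree_eq_zeroE)
  moreover have "lead_coeff c = 1" using c assms(1,2) by (simp add: lead_coeff_mult)
  ultimately show ?thesis using c by simp
qed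

lemma monic_eq_prod_linear_factors:
  fixes f :: "'a::idom poly"
  assumes "monic f" "finite S" "card S = degree f" "\<And>z. z \<in> S \<Longrightarrow> poly f z = 0"
  shows "f = (\<Prod>z\<in>S. [:-z, 1:])"
proof (rule monic_dvd_imp_eq[symmetric])
  show "monic (\<Prod>z\<in>S. [:-z, 1:])" by (rule monic_prod_linear_factors)
  show "(\<Prod>z\<in>S. [:-z, 1:]) dvd f" using assms by (intro prod_linear_factors_dvd)
  show "degree (\<Prod>z\<in>S. [:-z, 1:]) = degree f"
    using degree_prod_linear_factors[OF assms(2)] assms(3) by simp
qed (rule assms(1))

lemma degree_monom_minus_const:
  "n > 0 \<Longrightarrow> degree (monom (1::'a::comm_ring_1) n - [:c:]) = n"
  by (rule antisym, rule degree_diff_le) (auto simp: degree_monom_le coeff_const intro: le_degree)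

lemma monic_monom_minus_const: "n > 0 \<Longrightarrow> monic (monom (1::'a::comm_ring_1) n - [:c:])"
  by (simp add: degree_monom_minus_const coeff_const)

lemma monom_minus_const_eq_prod:
  assumes "n > 0" "z \<noteq> 0"
  shows "monom 1 n - [:z:] = (\<Prod>y\<in>{y::complex. y ^ n = z}. [:-y, 1:])"
  using assms
  by (intro monic_eq_prod_linear_factors)
     (auto simp: monic_monom_minus_const degree_monom_minus_const card_nth_roots poly_monom
        finite_nth_roots coeff_const)

lemma monom_pcompose_monom:
  "monom (1::'a::comm_ring_1) k \<circ>\<^sub>p monom 1 j = monom 1 (j * k)"
proof -
  have "monom (1::'a) k \<circ>\<^sub>p monom 1 j = [:0, 1:] ^ k \<circ>\<^sub>p monom 1 j"
    by (simp only: x_as_monom x_pow_n)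
  also have "\<dots> = ([:0, 1:] \<circ>\<^sub>p monom 1 j) ^ k" by (rule pcompose_hom.hom_power)
  also have "\<dots> = monom 1 (j * k)" by (simp add: monom_power)
  finally show ?thesis .
qed

lemma linear_pcompose_monom: "[:-z, 1:] \<circ>\<^sub>p monom 1 n = monom (1::'a::comm_ring_1) n - [:z:]"
  by simp

lemma dvd_degree_less_imp_zero:
  fixes f r :: "'a::idom poly"
  assumes "f dvd r" "degree r < degree f"
  shows "r = 0"
proof (rule ccontr)
  assume "r \<noteq> 0"
  with assms(1) have "degree f \<le> degree r" by (rule dvd_imp_degree_le)
  with assms(2) show False by simp
qed

lemma dvd_sub_pseudo_mod:
  fixes f g :: "'a::idom poly"
  assumes "monic g"
  shows "g dvd f - pseudo_mod f g"
proof -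
  obtain q where q: "pseudo_divmod f g = (q, pseudo_mod f g)"
    by (metis pseudo_mod_def prod.collapse)
  have "g \<noteq> 0" using assms by auto
  then have "f = g * q + pseudo_mod f g" using pseudo_divmod(1)[OF _ q] assms by simp
  then show ?thesis by (metis add_diff_cancel_right' dvd_triv_left)
qed

lemma degree_pseudo_mod_less:
  fixes f g :: "'a::idom poly"
  assumes "degree g > 0"
  shows "degree (pseudo_mod f g) < degree g"
proof -
  have "g \<noteq> 0" using assms by auto
  then show ?thesis using pseudo_mod(2)[of g f] assms by auto
qed

lemma integral_quotient_by_monic:
  fixes A :: "'a::field_char_0 poly"
  assumes "monic b" "of_int_poly c = A * of_int_poly b"
  obtains q where "A = of_int_poly q" "c = b * q"
proof -
  define r where "r = pseudo_mod c b"
  define q where "q = (c - r) div b"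
  have cq: "c = b * q + r"
    using dvd_sub_pseudo_mod[OF assms(1), of c] unfolding q_def r_def by simp
  have "b \<noteq> 0" using assms(1) by auto
  then have r: "r = 0 \<or> degree r < degree b" using pseudo_mod(2)[of b c] unfolding r_def by simp
  have eq: "(A - of_int_poly q) * of_int_poly b = (of_int_poly r :: 'a poly)"
    using assms(2) unfolding cq
    by (simp add: algebra_simps of_int_poly_hom.hom_add of_int_poly_hom.hom_mult)
  have "A = of_int_poly q"
  proof (rule ccontr)
    assume ne: "A \<noteq> of_int_poly q"
    then have "(A - of_int_poly q) * of_int_poly b \<noteq> 0" using \<open>b \<noteq> 0\<close> by simp
    then have "r \<noteq> 0" using eq by auto
    moreover have "degree b \<le> degree r"
      using degree_mult_eq[of "A - of_int_poly q" "of_int_poly b :: 'a poly"] eq ne \<open>b \<noteq> 0\<close> by simp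
    ultimately show False using r by simp
  qed
  moreover from this eq have "r = 0" by simp
  ultimately show thesis using that cq by simp
qed

lemma map_poly_of_rat_mult:
  "map_poly (of_rat :: rat \<Rightarrow> 'a::field_char_0) (p * q) = map_poly of_rat p * map_poly of_rat q"
  by (induct p) (auto simp: hom_distribs)

section \<open>The cyclotomic polynomial over the complex numbers\<close>

definition cyclotomic_complex :: "nat \<Rightarrow> complex poly" where
  "cyclotomic_complex n = (\<Prod>z\<in>primitive_roots n. [:-z, 1:])"

lemma monic_cyclotomic_complex: "monic (cyclotomic_complex n)"
  unfolding cyclotomic_complex_def by (rule monic_prod_linear_factors)

lemma degree_cyclotomic_complex: "n > 0 \<Longrightarrow> degree (cyclotomic_complex n) = card (primitive_roots n)"
  unfolding cyclotomic_complex_def by (rule degree_prod_linear_factors[OF finite_primitive_roots])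

lemma poly_cyclotomic_complex_eq_0_iff:
  "n > 0 \<Longrightarrow> poly (cyclotomic_complex n) z = 0 \<longleftrightarrow> z \<in> primitive_roots n"
  unfolding cyclotomic_complex_def by (simp add: poly_prod_0 finite_primitive_roots)

lemma cyclotomic_complex_1: "cyclotomic_complex 1 = [:-1, 1:]"
  unfolding cyclotomic_complex_def primitive_roots_1 by simp

lemma monom_minus_one_eq_prod_cyclotomic_complex:
  assumes "n > 0"
  shows "monom 1 n - 1 = (\<Prod>e\<in>{e. e dvd n}. cyclotomic_complex e)"
proof -
  have "monom 1 n - 1 = (\<Prod>z\<in>(\<Union>e\<in>{e. e dvd n}. primitive_roots e). [:-z, 1:])"
    using monom_minus_const_eq_prod[OF assms, of 1] roots_of_unity_eq_UN_primitive_roots[OF assms]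
    by simp
  also have "\<dots> = (\<Prod>e\<in>{e. e dvd n}. cyclotomic_complex e)"
    unfolding cyclotomic_complex_def
    by (rule prod.UNION_disjoint)
       (use assms in \<open>auto intro!: finite_primitive_roots intro: Nat.gr0I
          dest: primitive_roots_disjoint\<close>)
  finally show ?thesis .
qed

text \<open>By induction on \<open>n\<close>: \<open>X\<^sup>n - 1\<close> is \<open>cyclotomic_complex n\<close> times the product over the proper
  divisors of \<open>n\<close>, which is monic and integral, so the quotient is integral.\<close>

lemma cyclotomic_complex_integral: "n > 0 \<Longrightarrow> \<exists>c. cyclotomic_complex n = of_int_poly c"
proof (induction n rule: less_induct)
  case (less n)
  define D where "D = {e. e dvd n} - {n}"
  have D: "{e. e dvd n} = insert n D" "n \<notin> D" "finite D" using less.prems by (auto simp: D_def)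
  have "\<forall>e\<in>D. \<exists>c. cyclotomic_complex e = of_int_poly c"
    using less.prems by (auto simp: D_def intro!: less.IH intro: Nat.gr0I dest: dvd_imp_le)
  then obtain c where c: "\<And>e. e \<in> D \<Longrightarrow> cyclotomic_complex e = of_int_poly (c e)" by metis
  have cD: "(\<Prod>e\<in>D. cyclotomic_complex e) = of_int_poly (\<Prod>e\<in>D. c e)"
    using c by (simp add: of_int_poly_hom.hom_prod)
  have "of_int_poly (monom 1 n - 1) = (\<Prod>e\<in>{e. e dvd n}. cyclotomic_complex e)"
    using monom_minus_one_eq_prod_cyclotomic_complex[OF less.prems]
    by (simp add: of_int_poly_hom.hom_minus map_poly_monom)
  also have "\<dots> = cyclotomic_complex n * of_int_poly (\<Prod>e\<in>D. c e)"
    unfolding D(1) prod.insert[OF D(3,2)] cD ..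
  finally have "of_int_poly (monom 1 n - 1) = cyclotomic_complex n * of_int_poly (\<Prod>e\<in>D. c e)" .
  moreover have "monic (\<Prod>e\<in>D. c e)"
  proof -
    have "lead_coeff (of_int_poly (\<Prod>e\<in>D. c e) :: complex poly) = 1"
      unfolding cD[symmetric] by (simp add: lead_coeff_prod monic_cyclotomic_complex)
    then show ?thesis by simp
  qed
  ultimately show ?case by (metis integral_quotient_by_monic)
qed

section \<open>Irreducibility of the cyclotomic polynomial\<close>

lemma prime_dvd_binomial_power:
  fixes u v :: "'a::comm_ring_1"
  assumes p: "prime p"
  shows "of_nat p dvd (u + v) ^ p - u ^ p - v ^ p"
proof -
  have p0: "p > 0" using p prime_gt_0_nat by blast
  have "{..p} = insert p (insert 0 {1..<p})" using p0 by auto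
  then have "(u + v) ^ p - u ^ p - v ^ p = (\<Sum>k\<in>{1..<p}. of_nat (p choose k) * u ^ k * v ^ (p - k))"
    using p0 by (simp add: binomial_ring[of u v p] algebra_simps)
  also have "of_nat p dvd \<dots>"
  proof (rule dvd_sum)
    fix k assume "k \<in> {1..<p}"
    then have "p dvd p choose k" using p by (intro dvd_choose_prime) auto
    then obtain c where "p choose k = p * c" ..
    then show "of_nat p dvd of_nat (p choose k) * u ^ k * v ^ (p - k)" by (simp add: mult.assoc)
  qed
  finally show ?thesis .
qed

lemma prime_dvd_power_self_sub:
  fixes a :: int
  assumes p: "prime p"
  shows "int p dvd a ^ p - a"
proof -
  define b where "b = nat (a mod int p)"
  have p0: "p > 0" using p prime_gt_0_nat by blast
  have ab: "[a = int b] (mod int p)" using p0 by (simp add: b_def cong_def)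
  have "[b ^ p = b] (mod p)"
  proof (cases "p dvd b")
    case True
    moreover have "b dvd b ^ p" using p0 by simp
    ultimately show ?thesis by (simp add: cong_def dvd_imp_mod_0 dvd_trans[of p b])
  next
    case False
    have "[b ^ (p - 1) * b = 1 * b] (mod p)" using fermat_theorem[OF p False] by (rule cong_mult) simp
    moreover have "b ^ (p - 1) * b = b ^ p" using p0 by (cases p) (simp_all add: power_Suc2)
    ultimately show ?thesis by simp
  qed
  then have "[int (b ^ p) = int b] (mod int p)" by (simp only: cong_int_iff)
  then have "[int b ^ p = int b] (mod int p)" by simp
  then have "[a ^ p = a] (mod int p)" using ab by (meson cong_pow cong_sym cong_trans)
  then show ?thesis by (simp add: cong_iff_dvd_diff)
qed

lemma prime_dvd_power_sub_pcompose:
  fixes f :: "int poly"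
  assumes p: "prime p"
  shows "of_nat p dvd f ^ p - f \<circ>\<^sub>p monom 1 p"
proof (induction f rule: pCons_induct)
  case 0
  then show ?case using p by (simp add: prime_gt_0_nat power_0_left)
next
  case (pCons a g)
  define X :: "int poly" where "X = monom 1 p"
  have f: "pCons a g = [:a:] + [:0, 1:] * g" by simp
  have c: "pCons a g \<circ>\<^sub>p X = [:a:] + X * (g \<circ>\<^sub>p X)" by (simp add: pcompose_pCons)
  have e: "([:0, 1:] * g) ^ p = X * g ^ p"
    unfolding X_def by (simp only: power_mult_distrib x_as_monom x_pow_n)
  have "pCons a g ^ p - pCons a g \<circ>\<^sub>p X =
        (pCons a g ^ p - [:a:] ^ p - ([:0, 1:] * g) ^ p) + ([:a:] ^ p - [:a:])
        + X * (g ^ p - g \<circ>\<^sub>p X)"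
    unfolding c e by (simp add: algebra_simps)
  also have "of_nat p dvd \<dots>"
  proof (intro dvd_add)
    show "of_nat p dvd pCons a g ^ p - [:a:] ^ p - ([:0, 1:] * g) ^ p"
      unfolding f by (rule prime_dvd_binomial_power[OF p])
    have "[:int p:] dvd [:a ^ p - a:]"
      using prime_dvd_power_self_sub[OF p] by (simp add: const_poly_dvd_const_poly_iff)
    then show "of_nat p dvd [:a:] ^ p - [:a:]"
      by (simp add: of_nat_poly coeff_lift_hom.hom_power[symmetric])
    show "of_nat p dvd X * (g ^ p - g \<circ>\<^sub>p X)" using pCons.IH unfolding X_def by simp
  qed
  finally show ?case unfolding X_def .
qed

lemma poly_of_int_poly_pcompose_monom:
  "poly (of_int_poly (g \<circ>\<^sub>p monom 1 j)) z = poly (of_int_poly g) (z ^ j :: 'a::comm_ring_1)"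
  by (simp add: of_int_hom.map_poly_pcompose poly_pcompose map_poly_monom poly_monom)

lemma map_poly_of_rat_of_int_poly:
  "map_poly of_rat (of_int_poly h :: rat poly) = (of_int_poly h :: 'a::field_char_0 poly)"
  by (simp add: map_poly_map_poly o_def)

lemma coprime_shift_large_prime_factors:
  fixes k n N :: nat
  assumes "gcd k n = 1" "n > 0"
  obtains k' where "k' > 0" "k' mod n = k mod n" "\<And>q. prime q \<Longrightarrow> q dvd k' \<Longrightarrow> N \<le> q"
proof -
  define S where "S = {q. prime q \<and> q < N \<and> \<not> q dvd k}"
  define T where "T = \<Prod>S"
  have finS: "finite S" unfolding S_def by (rule finite_subset[of _ "{..<N}"]) auto
  have "T > 0" unfolding T_def using finS by (intro prod_pos) (auto simp: S_def prime_gt_0_nat)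
  have S_dvd: "q \<in> S \<longleftrightarrow> q dvd T" if q: "prime q" for q
  proof
    assume "q dvd T"
    then obtain q' where "q' \<in> S" "q dvd q'"
      using prime_dvd_prod_iff[OF finS q, of id] unfolding T_def by auto
    moreover from this have "q = q'" using q by (intro primes_dvd_imp_eq) (auto simp: S_def)
    ultimately show "q \<in> S" by simp
  qed (use finS in \<open>auto simp: T_def intro: dvd_prodI[where f = "\<lambda>x. x"]\<close>)
  have "N \<le> q" if q: "prime q" "q dvd k + n * T" for q
  proof (rule ccontr)
    assume "\<not> N \<le> q"
    show False
    proof (cases "q dvd k")
      case True
      then have "q dvd n * T" using q(2) by (simp add: dvd_add_right_iff)
      moreover have "\<not> q dvd n" using True q(1) assms(1)
        by (metis gcd_greatest is_unit_gcd_iff not_prime_unit)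
      ultimately show False using q(1) True S_dvd[OF q(1)] by (auto simp: prime_dvd_mult_iff S_def)
    next
      case False
      then have "q dvd T" using S_dvd[OF q(1)] q(1) \<open>\<not> N \<le> q\<close> by (simp add: S_def)
      then show False using q(2) False by (simp add: dvd_add_left_iff)
    qed
  qed
  then show thesis using that[of "k + n * T"] \<open>T > 0\<close> \<open>n > 0\<close> by simp
qed

locale int_root_of_unity_minimal_poly =
  fixes f :: "int poly" and w :: complex and n :: nat
  assumes monic: "monic f"
    and root: "poly (of_int_poly f) w = 0"
    and n_pos: "n > 0" and root_of_unity: "w ^ n = 1"
    and minimal: "\<And>h. poly (of_int_poly h) w = 0 \<Longrightarrow> f dvd h"
begin

lemma degree_pos: "degree f > 0"
  using monic root monic_degree_0[of f] by (cases "degree f") auto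

definition rem :: "nat \<Rightarrow> int poly" where
  "rem j = pseudo_mod (f \<circ>\<^sub>p monom 1 j) f"

lemma degree_rem: "degree (rem j) < degree f"
  unfolding rem_def by (rule degree_pseudo_mod_less[OF degree_pos])

lemma dvd_pcompose_sub_rem: "f dvd f \<circ>\<^sub>p monom 1 j - rem j"
  unfolding rem_def by (rule dvd_sub_pseudo_mod[OF monic])

lemma power_mod_period: "w ^ j = w ^ (j mod n)"
proof -
  have "w ^ j = (w ^ n) ^ (j div n) * w ^ (j mod n)"
    by (simp only: power_mult[symmetric] power_add[symmetric] mult_div_mod_eq)
  then show ?thesis using root_of_unity by simp
qed

lemma poly_rem: "poly (of_int_poly (rem j)) w = poly (of_int_poly f) (w ^ j)"
proof -
  obtain q where q: "f \<circ>\<^sub>p monom 1 j - rem j = f * q" using dvd_pcompose_sub_rem ..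
  have "poly (of_int_poly (f \<circ>\<^sub>p monom 1 j - rem j)) w = 0"
    unfolding q by (simp add: of_int_poly_hom.hom_mult root)
  then show ?thesis by (simp add: of_int_poly_hom.hom_minus poly_of_int_poly_pcompose_monom)
qed

lemma rem_eq_0_iff: "rem j = 0 \<longleftrightarrow> poly (of_int_poly f) (w ^ j) = 0"
proof
  assume "poly (of_int_poly f) (w ^ j) = 0"
  then have "f dvd rem j" by (intro minimal) (simp add: poly_rem)
  then show "rem j = 0" using degree_rem by (rule dvd_degree_less_imp_zero)
qed (simp flip: poly_rem)

lemma rem_mod: "rem j = rem (j mod n)"
proof -
  have "poly (of_int_poly (rem j - rem (j mod n))) w = 0"
    by (simp add: of_int_poly_hom.hom_minus poly_rem power_mod_period[of j])
  then have "f dvd rem j - rem (j mod n)" by (rule minimal)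
  moreover have "degree (rem j - rem (j mod n)) < degree f"
    using degree_diff_le_max[of "rem j" "rem (j mod n)"] degree_rem[of j] degree_rem[of "j mod n"]
    by simp
  ultimately show ?thesis using dvd_degree_less_imp_zero by fastforce
qed

lemma rem_coeffs_bounded:
  obtains B where "\<And>j i. \<bar>coeff (rem j) i\<bar> < B"
proof -
  let ?c = "\<lambda>(j, i). \<bar>coeff (rem j) i\<bar>"
  have "?c (j, i) \<in> ?c ` ({..<n} \<times> {..degree f})" for j i
  proof (cases "i \<le> degree f")
    case True
    then show ?thesis using rem_mod[of j] n_pos by (intro image_eqI[of _ _ "(j mod n, i)"]) auto
  next
    case False
    then have "coeff (rem j) i = 0" "coeff (rem 0) (degree f) = 0"
      using degree_rem[of j] degree_rem[of 0] by (simp_all add: coeff_eq_0)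
    then show ?thesis using n_pos by (intro image_eqI[of _ _ "(0, degree f)"]) auto
  qed
  then have "range ?c \<subseteq> ?c ` ({..<n} \<times> {..degree f})" by auto
  then have "finite (range ?c)" by (rule finite_subset) simp
  then show thesis using that[of "Max (range ?c) + 1"] by (fastforce intro: Max_ge)
qed

text \<open>If \<open>f(w\<^sup>j) = 0\<close> then \<open>f\<close> divides \<open>f(X\<^sup>j)\<^sup>p \<equiv> f(X\<^sup>j\<^sup>p)\<close> modulo \<open>p\<close> (Frobenius), so the
  remainder of \<open>f(X\<^sup>j\<^sup>p)\<close> has all coefficients divisible by \<open>p\<close>; as they are smaller than \<open>p\<close>,
  it vanishes.\<close>

lemma root_power_prime:
  assumes p: "prime p" and bound: "\<And>j i. \<bar>coeff (rem j) i\<bar> < int p"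
    and root_j: "poly (of_int_poly f) (w ^ j) = 0"
  shows "poly (of_int_poly f) (w ^ (j * p)) = 0"
proof -
  define F where "F k = f \<circ>\<^sub>p monom 1 k" for k
  obtain h where h: "f ^ p - F p = of_nat p * h"
    using prime_dvd_power_sub_pcompose[OF p, of f] unfolding F_def ..
  define H where "H = h \<circ>\<^sub>p monom 1 j"
  define Hr where "Hr = pseudo_mod H f"
  have FF: "F j ^ p - F (j * p) = of_nat p * H"
    using arg_cong[OF h, of "\<lambda>g. g \<circ>\<^sub>p monom 1 j"] unfolding F_def H_def
    by (simp add: pcompose_diff pcompose_hom.hom_power pcompose_assoc[symmetric]
        monom_pcompose_monom pcompose_mult of_nat_poly pcompose_const pcompose_smult)
  have "f dvd F j" using minimal root_j by (simp add: F_def poly_of_int_poly_pcompose_monom)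
  then have "f dvd F j ^ p" using dvd_power[of p "F j"] p by (auto simp: prime_gt_0_nat intro: dvd_trans)
  moreover have "f dvd F (j * p) - rem (j * p)" unfolding F_def by (rule dvd_pcompose_sub_rem)
  moreover have "f dvd H - Hr" unfolding Hr_def by (rule dvd_sub_pseudo_mod[OF monic])
  ultimately have "f dvd F j ^ p - (F (j * p) - rem (j * p)) - of_nat p * (H - Hr)"
    by (metis dvd_diff dvd_mult)
  moreover have "F j ^ p - (F (j * p) - rem (j * p)) - of_nat p * (H - Hr) =
      rem (j * p) + of_nat p * Hr"
    using FF by (simp add: algebra_simps)
  ultimately have "f dvd rem (j * p) + of_nat p * Hr" by simp
  moreover have "degree (rem (j * p) + of_nat p * Hr) < degree f"
  proof -
    have "degree (of_nat p * Hr) < degree f"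
      using degree_smult_le[of "int p" Hr] degree_pseudo_mod_less[OF degree_pos, of H]
      unfolding Hr_def by (simp add: of_nat_poly)
    then show ?thesis using degree_rem[of "j * p"] degree_add_le_max le_less_trans max_less_iff_conj
      by metis
  qed
  ultimately have "rem (j * p) + of_nat p * Hr = 0" by (rule dvd_degree_less_imp_zero)
  then have rem_jp: "rem (j * p) = - smult (int p) Hr" by (simp add: of_nat_poly eq_neg_iff_add_eq_0)
  have "rem (j * p) = 0"
  proof (rule poly_eqI)
    fix i
    have "int p dvd coeff (rem (j * p)) i" using rem_jp by simp
    then show "coeff (rem (j * p)) i = coeff 0 i"
      using dvd_imp_le_int[of "coeff (rem (j * p)) i" "int p"] bound[of "j * p" i] by fastforce
  qed
  then show ?thesis by (simp add: rem_eq_0_iff)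
qed

lemma root_power_large_prime_factors:
  assumes bound: "\<And>j i. \<bar>coeff (rem j) i\<bar> < B"
  shows "k > 0 \<Longrightarrow> (\<And>q. prime q \<Longrightarrow> q dvd k \<Longrightarrow> B \<le> int q) \<Longrightarrow> poly (of_int_poly f) (w ^ k) = 0"
proof (induction k rule: less_induct)
  case (less k)
  show ?case
  proof (cases "k = 1")
    case True
    then show ?thesis using root by simp
  next
    case False
    then obtain q where q: "prime q" "q dvd k" using prime_factor_nat by blast
    then obtain k' where k': "k = k' * q" by (metis dvd_def mult.commute)
    then have "k' < k" "k' > 0" using less.prems(1) prime_gt_1_nat[OF q(1)] by auto
    then have "poly (of_int_poly f) (w ^ k') = 0" using less.prems(2) k' by (intro less.IH) auto
    moreover have "\<bar>coeff (rem j) i\<bar> < int q" for j i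
      using bound[of j i] less.prems(2)[OF q] by simp
    ultimately show ?thesis using root_power_prime[OF q(1)] k' by blast
  qed
qed

lemma root_power_coprime:
  assumes "gcd k n = 1"
  shows "poly (of_int_poly f) (w ^ k) = 0"
proof -
  obtain B where B: "\<And>j i. \<bar>coeff (rem j) i\<bar> < B" using rem_coeffs_bounded by blast
  obtain k' where k': "k' > 0" "k' mod n = k mod n" "\<And>q. prime q \<Longrightarrow> q dvd k' \<Longrightarrow> nat B \<le> q"
    using coprime_shift_large_prime_factors[OF assms n_pos] by blast
  have "w ^ k' = w ^ k" using power_mod_period k'(2) by metis
  then show ?thesis
    using root_power_large_prime_factors[OF B k'(1)] k'(3) by (metis nat_le_iff)
qed

end

lemma monic_int_multiple_of_factor:
  fixes g :: "int poly" and f0 :: "rat poly"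
  assumes g: "monic g" and f0: "f0 dvd of_int_poly g"
  obtains f c where "monic f" "c \<noteq> 0" "of_int_poly f = smult c f0"
proof -
  obtain h where "of_int_poly g = f0 * h" using f0 ..
  moreover obtain r rg where rr: "rat_to_normalized_int_poly f0 = (r, rg)" by force
  ultimately obtain r' where "g = rg * smult (content g) r'"
    using rat_to_int_factor_explicit by blast
  then have "lead_coeff rg * lead_coeff (smult (content g) r') = 1"
    using g by (metis lead_coeff_mult)
  then have lc: "lead_coeff rg = 1 \<or> lead_coeff rg = -1" by (rule pos_zmult_eq_1_iff_lemma)
  have f0r: "f0 = smult r (of_int_poly rg)" and r0: "r > 0"
    using rat_to_normalized_int_poly[OF rr] by auto
  show thesis
  proof (rule that)
    show "monic (smult (lead_coeff rg) rg)" using lc by auto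
    show "rat_of_int (lead_coeff rg) / r \<noteq> 0" using lc r0 by auto
    show "of_int_poly (smult (lead_coeff rg) rg) = smult (rat_of_int (lead_coeff rg) / r) f0"
      using r0 by (simp add: f0r of_int_hom.map_poly_hom_smult)
  qed
qed

lemma least_degree_root_dvd:
  fixes f0 g :: "rat poly" and z :: complex
  assumes f0: "f0 \<noteq> 0" "poly (map_poly of_rat f0) z = 0"
    and least: "\<And>h. h \<noteq> 0 \<Longrightarrow> poly (map_poly of_rat h) z = 0 \<Longrightarrow> degree f0 \<le> degree h"
    and g: "poly (map_poly of_rat g) z = 0"
  shows "f0 dvd g"
proof -
  have "map_poly of_rat g = map_poly of_rat f0 * map_poly of_rat (g div f0)
      + (map_poly of_rat (g mod f0) :: complex poly)"
    by (subst div_mult_mod_eq[of g f0, symmetric]) (simp add: hom_distribs map_poly_of_rat_mult)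
  then have "poly (map_poly of_rat (g mod f0)) z = (0::complex)"
    using f0(2) g by (metis add.left_neutral mult_zero_left poly_add poly_mult)
  then have "g mod f0 = 0"
    using least[of "g mod f0"] degree_mod_less[OF f0(1), of g] by fastforce
  then show ?thesis by (simp add: dvd_eq_mod_eq_0)
qed

text \<open>A rational polynomial of least degree vanishing at \<open>\<zeta>\<^sub>n\<close> has, up to a scalar, a monic
  integral multiple; this multiple satisfies the hypotheses of
  \<open>int_root_of_unity_minimal_poly\<close> and hence vanishes at all primitive \<open>n\<close>-th roots.\<close>

lemma least_degree_root_vanishes_at_primitive_roots:
  fixes f0 :: "rat poly"
  assumes n: "n > 0" and f0: "f0 \<noteq> 0" "poly (map_poly of_rat f0) (zeta n) = 0"
    and least: "\<And>h. h \<noteq> 0 \<Longrightarrow> poly (map_poly of_rat h) (zeta n) = 0 \<Longrightarrow> degree f0 \<le> degree h"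
    and z: "z \<in> primitive_roots n"
  shows "poly (map_poly of_rat f0) z = 0"
proof -
  note f0_dvd = least_degree_root_dvd[OF f0 least]
  have "poly (of_int_poly (monom 1 n - 1 :: int poly)) (zeta n) = (0::complex)"
    using zeta_power_eq_1_iff[OF n, of n] by (simp add: of_int_poly_hom.hom_minus map_poly_monom poly_monom)
  then have "poly (map_poly of_rat (of_int_poly (monom 1 n - 1) :: rat poly)) (zeta n) = (0::complex)"
    by (simp only: map_poly_of_rat_of_int_poly)
  then obtain f c where f: "monic f" "c \<noteq> 0" "of_int_poly f = smult c f0"
    using monic_int_multiple_of_factor[OF monic_monom_minus_const[OF n, of 1], of f0] f0_dvd
    by (metis one_poly_eq_simps(1))
  have f_map: "(of_int_poly f :: complex poly) = smult (of_rat c) (map_poly of_rat f0)"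
    by (metis f(3) map_poly_of_rat_of_int_poly of_rat_hom.map_poly_hom_smult)
  interpret int_root_of_unity_minimal_poly f "zeta n" n
  proof
    show "poly (of_int_poly f) (zeta n) = 0" using f_map f0(2) by simp
    show "zeta n ^ n = 1" using zeta_power_eq_1_iff[OF n] by simp
    fix h :: "int poly"
    assume "poly (of_int_poly h) (zeta n) = 0"
    then have "poly (map_poly of_rat (of_int_poly h :: rat poly)) (zeta n) = (0::complex)"
      by (simp only: map_poly_of_rat_of_int_poly)
    then have "f0 dvd of_int_poly h" using f0_dvd by blast
    then obtain u where "of_int_poly h = f0 * u" ..
    then have "of_int_poly h = smult (inverse c) u * of_int_poly f" using f(2,3) by simp
    then show "f dvd h" using f(1) by (metis integral_quotient_by_monic dvd_triv_left)
  qed (use f(1) n in auto)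
  obtain k where "gcd k n = 1" "z = zeta n ^ k" using primitive_root_eq_zeta_power[OF n z] .
  then have "poly (of_int_poly f) z = 0" using root_power_coprime by simp
  then show ?thesis using f_map f(2) by simp
qed

lemma card_primitive_roots_le_degree:
  fixes q :: "rat poly"
  assumes n: "n > 0" and q: "q \<noteq> 0" "poly (map_poly of_rat q) (zeta n) = 0"
  shows "card (primitive_roots n) \<le> degree q"
proof -
  let ?P = "\<lambda>g :: rat poly. g \<noteq> 0 \<and> poly (map_poly of_rat g) (zeta n) = 0"
  obtain f0 where f0: "?P f0" and least: "\<And>h. ?P h \<Longrightarrow> degree f0 \<le> degree h"
    using ex_has_least_nat[of ?P q degree] q by blast
  have "poly (map_poly of_rat q) z = (0::complex)" if "z \<in> primitive_roots n" for z
  proof -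
    have "poly (map_poly of_rat f0) z = (0::complex)"
      using least_degree_root_vanishes_at_primitive_roots[OF n _ _ _ that] f0 least by blast
    moreover have "f0 dvd q" using least_degree_root_dvd[of f0 "zeta n" q] f0 least q(2) by blast
    ultimately show ?thesis by (auto simp: map_poly_of_rat_mult elim!: dvdE)
  qed
  moreover have "(map_poly of_rat q :: complex poly) \<noteq> 0" using q(1) by simp
  ultimately have "card (primitive_roots n) \<le> card {z. poly (map_poly of_rat q) z = (0::complex)}"
    by (intro card_mono poly_roots_finite) auto
  also have "\<dots> \<le> degree q" using card_poly_roots_bound[of "map_poly of_rat q :: complex poly"] q(1)
    by simp
  finally show ?thesis .
qed

section \<open>The integral cyclotomic polynomial\<close>

lemma degree_diff_monic_less:
  fixes a b :: "'a::comm_ring_1 poly"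
  assumes "monic a" "monic b" "degree a = degree b" "a \<noteq> b"
  shows "degree (a - b) < degree a"
proof -
  have "degree (a - b) \<le> degree a" using degree_diff_le_max[of a b] assms(3) by simp
  moreover have "coeff (a - b) (degree a) = 0" using assms by simp
  ultimately show ?thesis using assms(4) by (metis eq_iff_diff_eq_0 leading_coeff_0_iff le_neq_implies_less)
qed

lemma cyclotomic_poly_eqI:
  assumes lc: "lead_coeff c = 1" and root: "poly (of_int_poly c) (zeta n) = (0::complex)"
    and min_c: "\<And>q :: rat poly. q \<noteq> 0 \<Longrightarrow> poly (map_poly of_rat q) (zeta n) = (0::complex) \<Longrightarrow>
      degree c \<le> degree q"
  shows "cyclotomic_poly n = c"
  unfolding cyclotomic_poly_def zeta_def[symmetric]
proof (rule the_equality)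
  let ?root = "\<lambda>q :: rat poly. poly (map_poly of_rat q) (zeta n) = (0::complex)"
  show "lead_coeff c = 1 \<and> poly (of_int_poly c) (zeta n) = 0 \<and>
      (\<forall>q. q \<noteq> 0 \<and> ?root q \<longrightarrow> degree c \<le> degree q)"
    using lc root min_c by blast
  fix p :: "int poly"
  assume p: "lead_coeff p = 1 \<and> poly (of_int_poly p) (zeta n) = 0 \<and>
    (\<forall>q. q \<noteq> 0 \<and> ?root q \<longrightarrow> degree p \<le> degree q)"
  have root_of_int: "?root (of_int_poly h)" if "poly (of_int_poly h) (zeta n) = (0::complex)" for h
    using that by (simp only: map_poly_of_rat_of_int_poly)
  have "(of_int_poly c :: rat poly) \<noteq> 0" using lc by auto
  then have "degree p \<le> degree (of_int_poly c :: rat poly)" using p root_of_int[OF root] by blast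
  moreover have "degree c \<le> degree (of_int_poly p :: rat poly)"
    using p root_of_int[of p] by (intro min_c) auto
  ultimately have deg: "degree p = degree c" by simp
  show "p = c"
  proof (rule ccontr)
    assume "p \<noteq> c"
    then have lt: "degree (p - c) < degree p"
      using p lc deg by (intro degree_diff_monic_less) auto
    have "poly (of_int_poly (p - c)) (zeta n) = (0::complex)"
      using p root by (simp add: of_int_poly_hom.hom_minus)
    moreover have "(of_int_poly (p - c) :: rat poly) \<noteq> 0" using \<open>p \<noteq> c\<close> by simp
    ultimately have "degree p \<le> degree (of_int_poly (p - c) :: rat poly)"
      using p root_of_int by blast
    with lt show False by simp
  qed
qed

lemma of_int_poly_cyclotomic_poly:
  assumes n: "n > 0"
  shows "of_int_poly (cyclotomic_poly n) = cyclotomic_complex n"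
proof -
  obtain c where c: "cyclotomic_complex n = of_int_poly c"
    using cyclotomic_complex_integral[OF n] by blast
  have "cyclotomic_poly n = c"
  proof (rule cyclotomic_poly_eqI)
    show "lead_coeff c = 1"
      using monic_cyclotomic_complex[of n] unfolding c by (metis of_int_hom.hom_lead_coeff of_int_eq_1_iff)
    show "poly (of_int_poly c) (zeta n) = (0::complex)"
      using poly_cyclotomic_complex_eq_0_iff[OF n] zeta_in_primitive_roots[OF n] c by simp
    show "degree c \<le> degree q" if "q \<noteq> 0" "poly (map_poly of_rat q) (zeta n) = (0::complex)" for q
      using card_primitive_roots_le_degree[OF n that] degree_cyclotomic_complex[OF n] c by simp
  qed
  then show ?thesis using c by simp
qed

lemma cyclotomic_poly_1: "cyclotomic_poly 1 = [:-1, 1:]"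
proof (rule of_int_poly_hom.injectivity[where 'a = complex])
  have "of_int_poly (cyclotomic_poly 1) = cyclotomic_complex 1" by (rule of_int_poly_cyclotomic_poly) simp
  moreover have "(of_int_poly [:-1, 1:] :: complex poly) = [:-1, 1:]"
    by (rule poly_eqI) (simp add: coeff_map_poly coeff_pCons split: nat.split)
  ultimately show "of_int_poly (cyclotomic_poly 1) = (of_int_poly [:-1, 1:] :: complex poly)"
    unfolding cyclotomic_complex_1 by simp
qed

lemma monom_minus_one_eq_prod_cyclotomic_poly:
  assumes "n > 0"
  shows "monom 1 n - 1 = (\<Prod>e\<in>{e. e dvd n}. cyclotomic_poly e)"
proof (rule of_int_poly_hom.injectivity[where 'a = complex])
  have "of_int_poly (\<Prod>e\<in>{e. e dvd n}. cyclotomic_poly e) = (\<Prod>e\<in>{e. e dvd n}. cyclotomic_complex e)"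
    using assms by (auto simp: of_int_poly_hom.hom_prod of_int_poly_cyclotomic_poly intro!: prod.cong
        intro: Nat.gr0I)
  moreover have "of_int_poly (monom 1 n - 1) = (monom 1 n - 1 :: complex poly)"
    by (simp add: of_int_poly_hom.hom_minus map_poly_monom)
  ultimately show "of_int_poly (monom 1 n - 1) = (of_int_poly (\<Prod>e\<in>{e. e dvd n}. cyclotomic_poly e) :: complex poly)"
    using monom_minus_one_eq_prod_cyclotomic_complex[OF assms] by simp
qed

lemma cyclotomic_complex_pcompose_prime:
  assumes p: "prime p" and m: "m > 0"
  shows "cyclotomic_complex m \<circ>\<^sub>p monom 1 p = (if p dvd m then cyclotomic_complex (p * m)
           else cyclotomic_complex (p * m) * cyclotomic_complex m)"
proof -
  have p0: "p > 0" using p by (simp add: prime_gt_0_nat)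
  have "cyclotomic_complex m \<circ>\<^sub>p monom 1 p = (\<Prod>z\<in>primitive_roots m. monom 1 p - [:z:])"
    unfolding cyclotomic_complex_def by (simp only: pcompose_prod linear_pcompose_monom)
  also have "\<dots> = (\<Prod>z\<in>primitive_roots m. \<Prod>y\<in>{y. y ^ p = z}. [:-y, 1:])"
    using primitive_root_nonzero[OF m] p0 by (intro prod.cong refl monom_minus_const_eq_prod) auto
  also have "\<dots> = (\<Prod>y\<in>(\<Union>z\<in>primitive_roots m. {y. y ^ p = z}). [:-y, 1:])"
    by (rule prod.UNION_disjoint[symmetric])
       (use m p0 in \<open>auto simp: finite_primitive_roots finite_nth_roots\<close>)
  also have "(\<Union>z\<in>primitive_roots m. {y. y ^ p = z}) = {y. y ^ p \<in> primitive_roots m}" by auto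
  also have "\<dots> = primitive_roots (p * m) \<union> (if p dvd m then {} else primitive_roots m)"
    by (rule primitive_roots_power_preimage[OF p m])
  finally have eq: "cyclotomic_complex m \<circ>\<^sub>p monom 1 p =
      (\<Prod>y\<in>primitive_roots (p * m) \<union> (if p dvd m then {} else primitive_roots m). [:-y, 1:])" .
  show ?thesis
  proof (cases "p dvd m")
    case False
    have "primitive_roots (p * m) \<inter> primitive_roots m = {}"
      using primitive_roots_disjoint[of _ "p * m" m] m prime_gt_1_nat[OF p] by auto
    then show ?thesis
      using eq False m p0 unfolding cyclotomic_complex_def
      by (simp add: prod.union_disjoint finite_primitive_roots)
  qed (use eq in \<open>simp add: cyclotomic_complex_def\<close>)
qed

lemma cyclotomic_poly_pcompose_prime:
  assumes p: "prime p" and m: "m > 0"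
  shows "cyclotomic_poly m \<circ>\<^sub>p monom 1 p = (if p dvd m then cyclotomic_poly (p * m)
           else cyclotomic_poly (p * m) * cyclotomic_poly m)"
proof (rule of_int_poly_hom.injectivity[where 'a = complex])
  have pm: "p * m > 0" using p m by (simp add: prime_gt_0_nat)
  have "of_int_poly (cyclotomic_poly m \<circ>\<^sub>p monom 1 p) = (cyclotomic_complex m \<circ>\<^sub>p monom 1 p :: complex poly)"
    using m by (simp add: of_int_hom.map_poly_pcompose of_int_poly_cyclotomic_poly map_poly_monom)
  then show "of_int_poly (cyclotomic_poly m \<circ>\<^sub>p monom 1 p) = (of_int_poly (if p dvd m
      then cyclotomic_poly (p * m) else cyclotomic_poly (p * m) * cyclotomic_poly m) :: complex poly)"
    using cyclotomic_complex_pcompose_prime[OF p m] m pm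
    by (simp add: of_int_poly_cyclotomic_poly of_int_poly_hom.hom_mult)
qed

section \<open>Primes congruent to 1 modulo m\<close>

lemma dvd_poly_sub_coeff_0: "(x::int) dvd poly f x - coeff f 0"
  by (cases f) simp

lemma cyclotomic_poly_coeff_0_dvd_1:
  assumes "m > 0"
  shows "coeff (cyclotomic_poly m) 0 dvd 1"
proof -
  have "(\<Prod>e\<in>{e. e dvd m}. poly (cyclotomic_poly e) 0) = -1"
    using arg_cong[OF monom_minus_one_eq_prod_cyclotomic_poly[OF assms], of "\<lambda>f. poly f 0"] assms
    by (simp add: poly_prod poly_monom power_0_left)
  moreover have "poly (cyclotomic_poly m) 0 dvd (\<Prod>e\<in>{e. e dvd m}. poly (cyclotomic_poly e) 0)"
    using assms by (intro dvd_prodI) auto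
  ultimately show ?thesis by (simp add: poly_0_coeff_0)
qed

lemma abs_poly_cyclotomic_poly_ge_2:
  assumes m: "m > 0" and a: "a \<ge> 3"
  shows "\<bar>poly (cyclotomic_poly m) (int a)\<bar> \<ge> 2"
proof -
  have "complex_of_int (poly (cyclotomic_poly m) (int a)) = poly (cyclotomic_complex m) (of_nat a)"
    using of_int_poly_cyclotomic_poly[OF m] by (metis of_int_hom.poly_map_poly of_int_of_nat_eq)
  also have "\<dots> = (\<Prod>z\<in>primitive_roots m. of_nat a - z)"
    unfolding cyclotomic_complex_def poly_prod by simp
  finally have eq: "complex_of_int (poly (cyclotomic_poly m) (int a)) =
      (\<Prod>z\<in>primitive_roots m. of_nat a - z)" .
  have ge: "norm (of_nat a - z) \<ge> 2" if z: "z \<in> primitive_roots m" for z :: complex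
  proof -
    have "norm z ^ m = 1" using primitive_root_power_eq_1_iff[OF z, of m] by (simp flip: norm_power)
    then have "norm z = 1" using power_eq_imp_eq_base[of "norm z" m 1] m by simp
    then show ?thesis using norm_triangle_ineq2[of "of_nat a :: complex" z] a by simp
  qed
  have "card (primitive_roots m) \<ge> 1"
    using zeta_in_primitive_roots[OF m] finite_primitive_roots[OF m]
    by (metis One_nat_def Suc_leI card_gt_0_iff empty_iff)
  then have "(2::real) \<le> (\<Prod>z\<in>primitive_roots m. 2)"
    using power_increasing[of 1 "card (primitive_roots m)" "2::real"] by simp
  also have "\<dots> \<le> (\<Prod>z\<in>primitive_roots m. norm (of_nat a - z))" by (rule prod_mono) (use ge in auto)
  also have "\<dots> = real_of_int \<bar>poly (cyclotomic_poly m) (int a)\<bar>"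
    by (simp only: prod_norm eq[symmetric] norm_of_int)
  finally show ?thesis by simp
qed

lemma monom_minus_one_eq_cyclotomic_mult:
  assumes m: "m > 0" and e: "e dvd m" "e \<noteq> m"
  obtains W where "monom 1 m - 1 = cyclotomic_poly m * (monom 1 e - 1) * W"
proof -
  have e0: "e > 0" using e m by (auto intro: Nat.gr0I)
  define A where "A = {d. d dvd m} - {m} - {d. d dvd e}"
  have "\<not> m dvd e" using e e0 dvd_antisym by blast
  then have split: "{d. d dvd m} = insert m ({d. d dvd e} \<union> A)" "m \<notin> {d. d dvd e} \<union> A"
    "{d. d dvd e} \<inter> A = {}"
    using e(1) by (auto simp: A_def intro: dvd_trans)
  have "finite A" "finite {d. d dvd e}" using m e0 by (auto simp: A_def)
  then have "monom 1 m - 1 = cyclotomic_poly m * (monom 1 e - 1) * (\<Prod>d\<in>A. cyclotomic_poly d)"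
    using split
    by (simp add: monom_minus_one_eq_prod_cyclotomic_poly[OF m]
        monom_minus_one_eq_prod_cyclotomic_poly[OF e0] prod.union_disjoint mult.assoc)
  then show thesis by (rule that)
qed

text \<open>\<open>\<Phi>\<^sub>m(a)\<close> divides \<open>(a\<^sup>m - 1)/(a\<^sup>e - 1) = \<Sum>i<m/e. a\<^sup>e\<^sup>i\<close>, which is \<open>\<equiv> m/e\<close> modulo \<open>q\<close>
  when \<open>a\<^sup>e \<equiv> 1\<close>.\<close>

lemma prime_dvd_cyclotomic_poly_value_imp_dvd_div:
  fixes m e q a :: nat
  assumes m: "m > 0" and e: "e dvd m" "e \<noteq> m" and a: "a \<ge> 2"
    and ae: "[a ^ e = 1] (mod q)" and qv: "int q dvd poly (cyclotomic_poly m) (int a)"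
  shows "q dvd m div e"
proof -
  have e0: "e > 0" using e m by (auto intro: Nat.gr0I)
  obtain W where W: "monom 1 m - 1 = cyclotomic_poly m * (monom 1 e - 1) * W"
    using monom_minus_one_eq_cyclotomic_mult[OF m e] .
  define v where "v = poly (cyclotomic_poly m) (int a)"
  define x where "x = int a ^ e"
  define k where "k = m div e"
  have mk: "m = e * k" unfolding k_def using e by simp
  have "int a ^ m - 1 = v * (x - 1) * poly W (int a)"
    using arg_cong[OF W, of "\<lambda>f. poly f (int a)"] unfolding v_def x_def by (simp add: poly_monom)
  moreover have "int a ^ m - 1 = (x - 1) * (\<Sum>i<k. x ^ i)"
    unfolding x_def mk by (simp add: power_mult power_diff_1_eq)
  ultimately have "(x - 1) * (\<Sum>i<k. x ^ i) = (x - 1) * (v * poly W (int a))"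
    by (simp add: algebra_simps)
  moreover have "int a \<le> x"
    using power_increasing[of 1 e "int a"] a e0 unfolding x_def by simp
  ultimately have "(\<Sum>i<k. x ^ i) = v * poly W (int a)" using a by simp
  then have c0: "[(\<Sum>i<k. x ^ i) = 0] (mod int q)" using qv unfolding v_def by (simp add: cong_0_iff)
  have "[int (a ^ e) = int 1] (mod int q)" using ae by (simp only: cong_int_iff)
  then have "[x = 1] (mod int q)" unfolding x_def by simp
  then have "[(\<Sum>i<k. x ^ i) = (\<Sum>i<k. 1)] (mod int q)"
    by (intro cong_sum) (metis cong_pow power_one)
  then have "[(\<Sum>i<k. x ^ i) = int k] (mod int q)" by simp
  from cong_trans[OF cong_sym[OF this] c0] have "[int k = 0] (mod int q)" .
  then show ?thesis by (simp add: cong_0_iff k_def)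
qed

lemma prime_dvd_cyclotomic_poly_value:
  fixes m q a :: nat
  assumes m: "m > 0" and q: "prime q" and a: "a \<ge> 2"
    and qv: "int q dvd poly (cyclotomic_poly m) (int a)" and qm: "\<not> q dvd m"
  shows "m dvd q - 1"
proof -
  have "cyclotomic_poly m dvd monom 1 m - 1"
    unfolding monom_minus_one_eq_prod_cyclotomic_poly[OF m] using m by (intro dvd_prodI) auto
  then have "poly (cyclotomic_poly m) (int a) dvd int a ^ m - 1"
    by (metis poly_hom.hom_dvd poly_1 poly_diff poly_monom mult_1)
  then have "int q dvd int a ^ m - 1" using qv by (rule dvd_trans[rotated])
  then have "[int (a ^ m) = int 1] (mod int q)" by (simp add: cong_iff_dvd_diff)
  then have am: "[a ^ m = 1] (mod q)" by (simp only: cong_int_iff)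
  have qa: "\<not> q dvd a"
  proof
    assume "q dvd a"
    then have "q dvd a ^ m" using m by (meson dvd_power dvd_trans)
    then have "q dvd 1" using cong_dvd_iff[OF am] by simp
    then show False using q by simp
  qed
  define e where "e = ord q a"
  have em: "e dvd m" using am unfolding e_def by (simp only: ord_divides)
  have "e dvd q - 1" using fermat_theorem[OF q qa] unfolding e_def by (simp only: ord_divides)
  moreover have "e = m"
  proof (rule ccontr)
    assume "e \<noteq> m"
    have "[a ^ e = 1] (mod q)" unfolding e_def by (simp only: ord_divides dvd_refl)
    then have "q dvd m div e" using prime_dvd_cyclotomic_poly_value_imp_dvd_div[OF m em \<open>e \<noteq> m\<close> a _ qv]
      by blast
    then show False using qm em by (metis dvd_div_mult_self dvd_mult2)
  qed
  ultimately show ?thesis by simp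
qed

lemma ex_prime_1_mod:
  fixes m N :: nat
  assumes m: "m > 0"
  obtains q where "prime q" "N < q" "m dvd q - 1"
proof -
  define a where "a = m * fact (N + 3)"
  have "fact (N + 3) \<ge> (3::nat)" using fact_ge_self[of "N + 3"] by linarith
  moreover have "fact (N + 3) \<le> a" using m unfolding a_def by simp
  ultimately have a3: "a \<ge> 3" by linarith
  define v where "v = poly (cyclotomic_poly m) (int a)"
  have "\<bar>v\<bar> \<ge> 2" unfolding v_def by (rule abs_poly_cyclotomic_poly_ge_2[OF m a3])
  then have "nat \<bar>v\<bar> \<noteq> 1" by simp
  then obtain q where q: "prime q" "q dvd nat \<bar>v\<bar>" using prime_factor_nat by blast
  then have "int q dvd int (nat \<bar>v\<bar>)" by (simp only: int_dvd_int_iff)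
  then have qv: "int q dvd v" by simp
  have qa: "\<not> q dvd a"
  proof
    assume "q dvd a"
    then have "int q dvd v - coeff (cyclotomic_poly m) 0"
      using dvd_poly_sub_coeff_0 unfolding v_def by (metis dvd_trans int_dvd_int_iff)
    then have "int q dvd 1"
      using qv cyclotomic_poly_coeff_0_dvd_1[OF m] by (metis dvd_diff_right_iff dvd_trans)
    then show False using q(1) by simp
  qed
  have "N < q"
  proof (rule ccontr)
    assume "\<not> N < q"
    then have "q dvd fact (N + 3)" using prime_gt_0_nat[OF q(1)] by (intro dvd_fact) auto
    then show False using qa unfolding a_def by simp
  qed
  moreover have "\<not> q dvd m" using qa unfolding a_def by auto
  ultimately show thesis
    using that q(1) prime_dvd_cyclotomic_poly_value[OF m q(1) _ qv[unfolded v_def]] a3 by simp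
qed

lemma infinite_primes_1_mod:
  fixes m :: nat
  assumes "m > 0"
  shows "infinite {q. prime q \<and> m dvd q - 1}"
  unfolding infinite_nat_iff_unbounded
proof
  fix N
  obtain q where "prime q" "N < q" "m dvd q - 1" using ex_prime_1_mod[OF assms] .
  then show "\<exists>q>N. q \<in> {q. prime q \<and> m dvd q - 1}" by blast
qed

section \<open>Congruences modulo powers of X\<close>

definition xpow_cong :: "nat \<Rightarrow> 'a::comm_ring_1 poly \<Rightarrow> 'a poly \<Rightarrow> bool" where
  "xpow_cong K a b \<longleftrightarrow> monom 1 K dvd a - b"

lemma xpow_cong_refl: "xpow_cong K a a"
  unfolding xpow_cong_def by simp

lemma xpow_cong_sym: "xpow_cong K a b \<Longrightarrow> xpow_cong K b a"
  unfolding xpow_cong_def by (subst minus_diff_eq[symmetric]) (simp only: dvd_minus_iff)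

lemma xpow_cong_trans:
  assumes "xpow_cong K a b" "xpow_cong K b c"
  shows "xpow_cong K a c"
proof -
  have "a - c = (a - b) + (b - c)" by simp
  then show ?thesis using assms unfolding xpow_cong_def by (simp only: dvd_add)
qed

lemma xpow_cong_mult:
  assumes "xpow_cong K a b" "xpow_cong K c d"
  shows "xpow_cong K (a * c) (b * d)"
proof -
  have "a * c - b * d = (a - b) * c + b * (c - d)" by (simp add: algebra_simps)
  then show ?thesis using assms unfolding xpow_cong_def by (simp add: dvd_add)
qed

lemma xpow_cong_mono:
  assumes "xpow_cong K a b" "K' \<le> K"
  shows "xpow_cong K' a b"
proof -
  have "monom (1::'a) K = monom 1 K' * monom 1 (K - K')" using assms(2) by (simp add: mult_monom)
  then have "monom (1::'a) K' dvd monom 1 K" by simp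
  then show ?thesis using assms(1) unfolding xpow_cong_def by (rule dvd_trans)
qed

lemma xpow_cong_coeff_0: "xpow_cong K a b \<Longrightarrow> K > 0 \<Longrightarrow> coeff a 0 = coeff b 0"
  unfolding xpow_cong_def monom_1_dvd_iff' by auto

lemma xpow_cong_pcompose_const: "p > 0 \<Longrightarrow> xpow_cong p (a \<circ>\<^sub>p monom 1 p) [:coeff a 0:]"
  unfolding xpow_cong_def by (cases a) (simp add: pcompose_pCons)

lemma xpow_cong_pcompose:
  assumes "xpow_cong K a b"
  shows "xpow_cong (t * K) (a \<circ>\<^sub>p monom 1 t) (b \<circ>\<^sub>p monom 1 t)"
proof -
  obtain w where "a - b = monom 1 K * w" using assms unfolding xpow_cong_def ..
  then have "a \<circ>\<^sub>p monom 1 t - b \<circ>\<^sub>p monom 1 t = monom 1 (t * K) * (w \<circ>\<^sub>p monom 1 t)"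
    by (metis pcompose_diff pcompose_mult monom_pcompose_monom)
  then show ?thesis unfolding xpow_cong_def by simp
qed

lemma xpow_cong_inverse:
  fixes e s :: "'a::comm_ring_1"
  assumes AB: "xpow_cong (2 * k) (A * B) [:e:]"
    and B: "xpow_cong (2 * k) B (smult e (1 - smult s (monom 1 k)))"
    and e: "e * e = 1" and s: "s * s = 1"
  shows "xpow_cong (2 * k) A (1 + smult s (monom 1 k))"
proof -
  define Y where "Y = 1 + smult s (monom 1 k)"
  have sq: "(1 - smult s X) * (1 + smult s X) = 1 - smult (s * s) (X * X)" for X :: "'a poly"
    by (simp add: algebra_simps)
  have "monom (1::'a) k * monom 1 k = monom 1 (2 * k)" by (simp add: mult_monom mult_2)
  then have "smult e (1 - smult s (monom 1 k)) * Y = smult e (1 - monom 1 (2 * k))"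
    unfolding Y_def mult_smult_left sq s by simp
  moreover have "xpow_cong (2 * k) (smult e (1 - monom 1 (2 * k))) [:e:]"
    unfolding xpow_cong_def monom_1_dvd_iff' by (simp add: coeff_1 coeff_const)
  ultimately have "xpow_cong (2 * k) (smult e (1 - smult s (monom 1 k)) * Y) [:e:]" by simp
  with B have "xpow_cong (2 * k) (B * Y) [:e:]" by (metis xpow_cong_mult xpow_cong_refl xpow_cong_trans)
  then have "xpow_cong (2 * k) (A * (B * Y)) (A * [:e:])" by (rule xpow_cong_mult[OF xpow_cong_refl])
  then have ABY: "xpow_cong (2 * k) (A * B * Y) (A * [:e:])" by (simp only: mult.assoc)
  have "xpow_cong (2 * k) (A * B * Y) ([:e:] * Y)" using xpow_cong_mult[OF AB xpow_cong_refl] .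
  with ABY have "xpow_cong (2 * k) (A * [:e:]) ([:e:] * Y)" by (metis xpow_cong_sym xpow_cong_trans)
  then have "xpow_cong (2 * k) (A * [:e:] * [:e:]) ([:e:] * Y * [:e:])"
    by (rule xpow_cong_mult[OF _ xpow_cong_refl])
  moreover have "A * [:e:] * [:e:] = A" "[:e:] * Y * [:e:] = Y"
    using e by (simp_all add: mult.assoc mult.commute[of _ Y])
  ultimately show ?thesis unfolding Y_def by simp
qed

text \<open>From \<open>\<Phi>\<^sub>m(X\<^sup>p) = \<Phi>\<^sub>p\<^sub>m \<Phi>\<^sub>m\<close> and \<open>\<Phi>\<^sub>m(X\<^sup>p) \<equiv> \<Phi>\<^sub>m(0)\<close> modulo \<open>X\<^sup>p\<close>.\<close>

lemma cyclotomic_poly_prime_mult_xpow_cong: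
  fixes e s :: int
  assumes p: "prime p" "\<not> p dvd m" "2 * k \<le> p" and m: "m > 0" and k: "k > 0"
    and cong: "xpow_cong (2 * k) (cyclotomic_poly m) (smult e (1 - smult s (monom 1 k)))"
    and e: "e * e = 1" and s: "s * s = 1"
  shows "xpow_cong (2 * k) (cyclotomic_poly (p * m)) (1 + smult s (monom 1 k))"
proof (rule xpow_cong_inverse[OF _ cong e s])
  have "coeff (cyclotomic_poly m) 0 = e" using xpow_cong_coeff_0[OF cong] k by simp
  then have "xpow_cong p (cyclotomic_poly m \<circ>\<^sub>p monom 1 p) [:e:]"
    using xpow_cong_pcompose_const[of p "cyclotomic_poly m"] prime_gt_0_nat[OF p(1)] by simp
  then show "xpow_cong (2 * k) (cyclotomic_poly (p * m) * cyclotomic_poly m) [:e:]"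
    using cyclotomic_poly_pcompose_prime[OF p(1) m] p(2,3) by (simp add: xpow_cong_mono)
qed

lemma squarefree_cyclotomic_poly_xpow_cong:
  assumes "finite S" "\<forall>q\<in>S. prime q"
  shows "\<exists>e s :: int. e * e = 1 \<and> s * s = 1 \<and>
           xpow_cong 2 (cyclotomic_poly (\<Prod>S)) (smult e (1 - smult s (monom 1 1)))"
  using assms
proof (induction S rule: finite_induct)
  case empty
  have "[:-1, 1:] = smult (-1) (1 - smult 1 (monom (1::int) 1))"
    by (rule poly_eqI) (simp add: coeff_monom coeff_pCons split: nat.split)
  then have "cyclotomic_poly (\<Prod>{}) = smult (-1) (1 - smult 1 (monom 1 1))"
    using cyclotomic_poly_1 by simp
  then show ?case using xpow_cong_refl by (metis mult_minus1 mult_1 minus_minus)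
next
  case (insert q S)
  obtain e s :: int where es: "e * e = 1" "s * s = 1"
    "xpow_cong 2 (cyclotomic_poly (\<Prod>S)) (smult e (1 - smult s (monom 1 1)))"
    using insert by auto
  have q: "prime q" using insert.prems by simp
  have "\<Prod>S > 0" using insert.prems insert.hyps(1) by (intro prod_pos) (auto simp: prime_gt_0_nat)
  moreover have "\<not> q dvd \<Prod>S"
    using insert.hyps insert.prems q prime_dvd_prod_iff[OF insert.hyps(1) q, of "\<lambda>x. x"]
    by (auto dest: primes_dvd_imp_eq)
  ultimately have "xpow_cong 2 (cyclotomic_poly (q * \<Prod>S)) (1 + smult s (monom 1 1))"
    using cyclotomic_poly_prime_mult_xpow_cong[of q "\<Prod>S" 1 e s] q es prime_ge_2_nat[OF q] by simp
  moreover have "1 + smult s (monom 1 1) = smult 1 (1 - smult (- s) (monom (1::int) 1))" by simp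
  ultimately show ?case using insert.hyps es(2) by (metis prod.insert mult_1 mult_minus_left
        mult_minus_right minus_minus)
qed

lemma cyclotomic_poly_mult_radical:
  assumes R: "R > 0"
  shows "t > 0 \<Longrightarrow> (\<And>q. prime q \<Longrightarrow> q dvd t \<Longrightarrow> q dvd R) \<Longrightarrow>
           cyclotomic_poly (R * t) = cyclotomic_poly R \<circ>\<^sub>p monom 1 t"
proof (induction t rule: less_induct)
  case (less t)
  show ?case
  proof (cases "t = 1")
    case True
    have "monom 1 1 = ([:0, 1:] :: int poly)" by (rule x_as_monom[symmetric])
    then show ?thesis using True pcompose_idR[of "cyclotomic_poly R"] by simp
  next
    case False
    obtain q where q: "prime q" "q dvd t" using prime_factor_nat[OF False] by blast
    then obtain t' where t': "t = q * t'" by (elim dvdE)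
    then have "t' < t" "t' > 0" using less.prems(1) prime_gt_1_nat[OF q(1)] by auto
    then have IH: "cyclotomic_poly (R * t') = cyclotomic_poly R \<circ>\<^sub>p monom 1 t'"
      using less.prems(2) t' by (intro less.IH) auto
    have "q dvd R * t'" using less.prems(2)[OF q] by simp
    then have "cyclotomic_poly (R * t') \<circ>\<^sub>p monom 1 q = cyclotomic_poly (q * (R * t'))"
      using cyclotomic_poly_pcompose_prime[OF q(1)] R \<open>t' > 0\<close> by simp
    then show ?thesis
      using IH t' by (simp add: pcompose_assoc[symmetric] monom_pcompose_monom mult.left_commute)
  qed
qed

lemma ex_cyclotomic_poly_linear_xpow_cong:
  fixes d :: nat and s :: int
  assumes d: "d > 0" and s: "s * s = 1"
  obtains R e where "R > 0" "\<And>q. prime q \<Longrightarrow> q dvd d \<Longrightarrow> q dvd R" "e * e = 1"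
    "xpow_cong 2 (cyclotomic_poly R) (smult e (1 - smult s (monom 1 1)))"
proof -
  define S where "S = {q. prime q \<and> q dvd d}"
  have S: "finite S" "\<forall>q\<in>S. prime q" using d by (auto simp: S_def intro: finite_subset[of _ "{..d}"] dvd_imp_le)
  have S_dvd: "q dvd \<Prod>S" if "prime q" "q dvd d" for q
    using that S(1) by (auto simp: S_def intro: dvd_prodI[where f = "\<lambda>x. x"])
  have R0: "\<Prod>S > 0" using S by (intro prod_pos) (auto simp: prime_gt_0_nat)
  obtain e0 s0 :: int where es: "e0 * e0 = 1" "s0 * s0 = 1"
    "xpow_cong 2 (cyclotomic_poly (\<Prod>S)) (smult e0 (1 - smult s0 (monom 1 1)))"
    using squarefree_cyclotomic_poly_xpow_cong[OF S] by blast
  show thesis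
  proof (cases "s0 = s")
    case True
    then show thesis using that[OF R0 S_dvd es(1)] es(3) by blast
  next
    case False
    then have "s0 = - s" using s es(2) by (metis minus_mult_minus square_eq_iff)
    obtain q where q: "prime q" "\<Prod>S < q" using bigger_prime by blast
    then have "\<not> q dvd \<Prod>S" using R0 by (auto dest: dvd_imp_le)
    then have "xpow_cong 2 (cyclotomic_poly (q * \<Prod>S)) (1 + smult s0 (monom 1 1))"
      using cyclotomic_poly_prime_mult_xpow_cong[of q "\<Prod>S" 1 e0 s0] q(1) R0 es
        prime_ge_2_nat[OF q(1)] by simp
    moreover have "q * \<Prod>S > 0" using R0 prime_gt_0_nat[OF q(1)] by simp
    ultimately show thesis using that[of "q * \<Prod>S" 1] S_dvd \<open>s0 = - s\<close> by simp
  qed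
qed

text \<open>The modulus \<open>m = R d\<close>: all prime factors of \<open>d\<close> divide \<open>R\<close>, so \<open>\<Phi>\<^sub>m(X) = \<Phi>\<^sub>R(X\<^sup>d)\<close>.\<close>

lemma ex_cyclotomic_poly_xpow_cong:
  fixes d :: nat and s :: int
  assumes d: "d > 0" and s: "s * s = 1"
  obtains m where "m > 0" "\<And>p. prime p \<Longrightarrow> 2 * d \<le> p \<Longrightarrow> \<not> p dvd m \<Longrightarrow>
    xpow_cong (2 * d) (cyclotomic_poly (p * m)) (1 + smult s (monom 1 d))"
proof -
  obtain R e where R: "R > 0" "\<And>q. prime q \<Longrightarrow> q dvd d \<Longrightarrow> q dvd R" and e: "e * e = 1"
    and cong: "xpow_cong 2 (cyclotomic_poly R) (smult e (1 - smult s (monom 1 1)))"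
    using ex_cyclotomic_poly_linear_xpow_cong[OF d s] by blast
  have "cyclotomic_poly (R * d) = cyclotomic_poly R \<circ>\<^sub>p monom 1 d"
    using cyclotomic_poly_mult_radical[OF R(1) d] R(2) by blast
  then have "xpow_cong (2 * d) (cyclotomic_poly (R * d)) (smult e (1 - smult s (monom 1 d)))"
    using xpow_cong_pcompose[OF cong, of d]
    by (simp add: pcompose_smult pcompose_diff monom_pcompose_monom mult.commute)
  then show thesis
    using that[of "R * d"] R(1) d cyclotomic_poly_prime_mult_xpow_cong[OF _ _ _ _ d _ e s] by simp
qed

theorem lemma7p2:
  fixes d :: nat and s :: int
  assumes "d > 0" and "s \<in> {-1, 1}"
  shows "infinite {n :: nat. n > 0 \<and> special_form n \<and>
           monom 1 (2 * d) dvd (cyclotomic_poly n - (1 + smult s (monom 1 d)))}"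
proof -
  have "s * s = 1" using assms(2) by auto
  then obtain m where m: "m > 0" and cong: "\<And>p. prime p \<Longrightarrow> 2 * d \<le> p \<Longrightarrow> \<not> p dvd m \<Longrightarrow>
      xpow_cong (2 * d) (cyclotomic_poly (p * m)) (1 + smult s (monom 1 d))"
    using ex_cyclotomic_poly_xpow_cong[OF assms(1)] by blast
  define P where "P = {p. prime p \<and> m dvd p - 1} - {..2 * d + m}"
  have "infinite P" unfolding P_def using infinite_primes_1_mod[OF m] by simp
  moreover have "inj_on (\<lambda>p. p * m) P" using m by (auto simp: inj_on_def)
  moreover have "(\<lambda>p. p * m) ` P \<subseteq> {n. n > 0 \<and> special_form n \<and>
      monom 1 (2 * d) dvd (cyclotomic_poly n - (1 + smult s (monom 1 d)))}"
  proof clarify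
    fix p assume "p \<in> P"
    then have "prime p" "m dvd p - 1" "\<not> p dvd m" "2 * d \<le> p"
      using m by (auto simp: P_def dest: dvd_imp_le)
    then show "p * m > 0 \<and> special_form (p * m) \<and>
        monom 1 (2 * d) dvd (cyclotomic_poly (p * m) - (1 + smult s (monom 1 d)))"
      using cong[of p] m unfolding special_form_def xpow_cong_def by (auto simp: prime_gt_0_nat)
  qed
  ultimately show ?thesis by (meson finite_imageD infinite_super)
qed

end
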